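(* Let $X,Y$ be real Banach spaces and let $H$ be a closed subspace of $L(X,Y)$ with $X^*\otimes Y\subseteq H$ such that $H$ has octahedral norm. Assume that the norm of $Y$ is non-rough. Then $X^*$ has octahedral norm.
   Context: The norm of a Banach space $Z$ is octahedral if for every finite-dimensional subspace $E$ and $\varepsilon>0$ there is $y\in S_Z$ with $\|x+\lambda y\|\ge(1-\varepsilon)(\|x\|+|\lambda|)$ for all $x\in E$, scalars $\lambda$. For $u\in S_Z$, $\eta(Z,u)=\limsup_{\|h\|\to0}\frac{\|u+h\|+\|u-h\|-2}{\|h\|}$. $Z$ is $\varepsilon$-rough if $\eta(Z,u)\ge\varepsilon$ for every $u\in S_Z$; the norm is rough if $\varepsilon$-rough for some $\varepsilon>0$, non-rough otherwise. $X^*\otimes Y$ is the space of finite-rank operators spanned by $x\mapsto x^*(x)y$. *)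

theory Defs
  imports "HOL-Analysis.Analysis"
begin

definition fin_dim_subspace :: "'a::real_vector set \<Rightarrow> bool" where
  "fin_dim_subspace E \<longleftrightarrow> subspace E \<and> (\<exists>B. finite B \<and> span B = E)"

text \<open>Octahedral norm of the normed space Z (given as a linear subspace of an
  ambient normed space, with the induced norm).\<close>
definition octahedral_on :: "'a::real_normed_vector set \<Rightarrow> bool" where
  "octahedral_on Z \<longleftrightarrow>
     (\<forall>E \<epsilon>. fin_dim_subspace E \<and> E \<subseteq> Z \<and> \<epsilon> > 0 \<longrightarrow>
        (\<exists>y\<in>Z. norm y = 1 \<and>
           (\<forall>x\<in>E. \<forall>t::real. norm (x + t *\<^sub>R y) \<ge> (1 - \<epsilon>) * (norm x + \<bar>t\<bar>))))"

abbreviation octahedral :: "'a::real_normed_vector itself \<Rightarrow> bool" where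
  "octahedral _ \<equiv> octahedral_on (UNIV :: 'a set)"

definition eta :: "'a::real_normed_vector \<Rightarrow> ereal" where
  "eta u = Limsup (at 0) (\<lambda>h. ereal ((norm (u + h) + norm (u - h) - 2) / norm h))"

definition eps_rough :: "'a::real_normed_vector itself \<Rightarrow> real \<Rightarrow> bool" where
  "eps_rough _ \<epsilon> \<longleftrightarrow> (\<forall>u::'a. norm u = 1 \<longrightarrow> eta u \<ge> ereal \<epsilon>)"

definition rough :: "'a::real_normed_vector itself \<Rightarrow> bool" where
  "rough T \<longleftrightarrow> (\<exists>\<epsilon>>0. eps_rough T \<epsilon>)"

definition rank_one :: "('a::real_normed_vector \<Rightarrow>\<^sub>L real) \<Rightarrow> 'b::real_normed_vector \<Rightarrow> 'a \<Rightarrow>\<^sub>L 'b" where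
  "rank_one f y = blinfun_scaleR_left y o\<^sub>L f"

text \<open>X^* \<otimes> Y as a subspace of L(X,Y).\<close>
definition tensor_dual :: "('a::real_normed_vector \<Rightarrow>\<^sub>L 'b::real_normed_vector) set" where
  "tensor_dual = span {rank_one f y | f y. True}"

end

theory Submission
  imports Defs
begin

text \<open>
  Given a finite-dimensional E \<subseteq> X^* and \<epsilon>, non-roughness gives a unit
  vector u \<in> Y at which the norm is almost differentiable, with approximate derivative
  a norming functional \<phi> of u. Octahedrality of H, applied to the finite-dimensional
  space of rank-one operators f \<otimes> u (f \<in> E), yields T \<in> H almost l1-orthogonal to all
  of them; the functional z = \<phi> \<circ> T then satisfies the octahedral inequality for E.
\<close>

text \<open>
  It is the graph of a
  partially defined linear functional dominated by the norm; Zorn's lemma applied to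
  norming graphs yields the Hahn-Banach theorem for an arbitrary real normed space.
\<close>
definition norming_graph :: "'a::real_normed_vector \<Rightarrow> ('a \<times> real) set \<Rightarrow> bool" where
  "norming_graph u G \<longleftrightarrow> (u, norm u) \<in> G
     \<and> (\<forall>x a y b. (x, a) \<in> G \<longrightarrow> (y, b) \<in> G \<longrightarrow> (x + y, a + b) \<in> G)
     \<and> (\<forall>x a c. (x, a) \<in> G \<longrightarrow> (c *\<^sub>R x, c * a) \<in> G)
     \<and> (\<forall>x a. (x, a) \<in> G \<longrightarrow> a \<le> norm x)"

lemma norming_graphD:
  assumes "norming_graph u G"
  shows "(u, norm u) \<in> G"
    and "(x, a) \<in> G \<Longrightarrow> (y, b) \<in> G \<Longrightarrow> (x + y, a + b) \<in> G"
    and "(x, a) \<in> G \<Longrightarrow> (c *\<^sub>R x, c * a) \<in> G"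
    and "(x, a) \<in> G \<Longrightarrow> a \<le> norm x"
  using assms unfolding norming_graph_def by blast+

lemma norming_graph_unique:
  assumes G: "norming_graph u G" and "(x, a) \<in> G" "(x, b) \<in> G"
  shows "a = b"
proof -
  have "(x + (-1) *\<^sub>R x, a + (-1) * b) \<in> G" "(x + (-1) *\<^sub>R x, b + (-1) * a) \<in> G"
    using assms by (blast intro: norming_graphD(2,3)[OF G])+
  then have "a - b \<le> 0" "b - a \<le> 0" using norming_graphD(4)[OF G] by fastforce+
  then show ?thesis by simp
qed

text \<open>The one-step extension: a new direction y can be given a value c compatible
  with norm-domination, since every lower bound a - norm (x - y) stays below every
  upper bound norm (z + y) - b.\<close>
lemma norming_graph_separating_constant:
  fixes y :: "'a::real_normed_vector"
  assumes G: "norming_graph u G"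
  obtains c where "\<And>x a. (x, a) \<in> G \<Longrightarrow> a - norm (x - y) \<le> c"
    and "\<And>z b. (z, b) \<in> G \<Longrightarrow> c \<le> norm (z + y) - b"
proof -
  have sep: "a - norm (x - y) \<le> norm (z + y) - b" if "(x, a) \<in> G" "(z, b) \<in> G" for x a z b
  proof -
    have "a + b \<le> norm (x + z)" using G that by (blast intro: norming_graphD)
    also have "\<dots> \<le> norm (x - y) + norm (z + y)"
      using norm_triangle_ineq[of "x - y" "z + y"] by simp
    finally show ?thesis by simp
  qed
  have zero: "(0, 0) \<in> G" using norming_graphD(3)[OF G norming_graphD(1)[OF G], of 0] by simp
  define S where "S = {a - norm (x - y) | x a. (x, a) \<in> G}"
  have ne: "S \<noteq> {}" using zero unfolding S_def by blast
  have bdd: "bdd_above S" unfolding S_def bdd_above_def using sep[OF _ zero] by auto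
  show ?thesis
  proof (rule that[of "Sup S"])
    show "a - norm (x - y) \<le> Sup S" if "(x, a) \<in> G" for x a
      using cSup_upper[OF _ bdd] that unfolding S_def by blast
    show "Sup S \<le> norm (z + y) - b" if "(z, b) \<in> G" for z b
      using cSup_least[OF ne, of "norm (z + y) - b"] sep that unfolding S_def by blast
  qed
qed

lemma separating_constant_dominates:
  fixes y :: "'a::real_normed_vector"
  assumes G: "norming_graph u G" and xa: "(x, a) \<in> G"
    and below: "\<And>x a. (x, a) \<in> G \<Longrightarrow> a - norm (x - y) \<le> c"
    and above: "\<And>z b. (z, b) \<in> G \<Longrightarrow> c \<le> norm (z + y) - b"
  shows "a + s * c \<le> norm (x + s *\<^sub>R y)"
proof (cases s "0::real" rule: linorder_cases)
  case equal
  then show ?thesis using norming_graphD(4)[OF G xa] by simp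
next
  case greater
  have "c \<le> norm ((1/s) *\<^sub>R x + y) - (1/s) * a"
    using above[OF norming_graphD(3)[OF G xa]] .
  also have "(1/s) *\<^sub>R x + y = (1/s) *\<^sub>R (x + s *\<^sub>R y)"
    using greater by (simp add: algebra_simps)
  finally have "c \<le> norm (x + s *\<^sub>R y) / s - a / s" using greater by simp
  then show ?thesis using greater by (simp add: field_simps)
next
  case less
  have "(-1/s) * a - norm ((-1/s) *\<^sub>R x - y) \<le> c"
    using below[OF norming_graphD(3)[OF G xa]] .
  moreover have "(-1/s) *\<^sub>R x - y = (-1/s) *\<^sub>R (x + s *\<^sub>R y)"
    using less by (simp add: algebra_simps)
  ultimately have "norm (x + s *\<^sub>R y) / s - a / s \<le> c" using less by simp
  then show ?thesis using less by (simp add: field_simps)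
qed

lemma norming_graph_extend:
  fixes u :: "'a::real_normed_vector"
  assumes G: "norming_graph u G" and y: "\<forall>a. (y, a) \<notin> G"
  shows "\<exists>G'. norming_graph u G' \<and> G \<subset> G'"
proof -
  obtain c where below: "\<And>x a. (x, a) \<in> G \<Longrightarrow> a - norm (x - y) \<le> c"
    and above: "\<And>z b. (z, b) \<in> G \<Longrightarrow> c \<le> norm (z + y) - b"
    using norming_graph_separating_constant[OF G] by metis
  define G' where "G' = {(x + s *\<^sub>R y, a + s * c) | x a s. (x, a) \<in> G}"
  have "norming_graph u G'"
    unfolding norming_graph_def
  proof (intro conjI allI impI)
    show "(u, norm u) \<in> G'" unfolding G'_def using norming_graphD(1)[OF G] by force
  next
    fix x a z b assume "(x, a) \<in> G'" "(z, b) \<in> G'"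
    then obtain x1 a1 s1 x2 a2 s2 where "(x1, a1) \<in> G" "(x2, a2) \<in> G"
      "x = x1 + s1 *\<^sub>R y" "a = a1 + s1 * c" "z = x2 + s2 *\<^sub>R y" "b = a2 + s2 * c"
      unfolding G'_def by blast
    then show "(x + z, a + b) \<in> G'" unfolding G'_def
      by (intro CollectI exI[of _ "x1 + x2"] exI[of _ "a1 + a2"] exI[of _ "s1 + s2"])
        (auto intro: norming_graphD(2)[OF G] simp: algebra_simps)
  next
    fix x a k assume "(x, a) \<in> G'"
    then obtain x1 a1 s where "(x1, a1) \<in> G" "x = x1 + s *\<^sub>R y" "a = a1 + s * c"
      unfolding G'_def by blast
    then have "(k *\<^sub>R x1, k * a1) \<in> G" "k *\<^sub>R x = k *\<^sub>R x1 + (k * s) *\<^sub>R y"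
      "k * a = k * a1 + (k * s) * c"
      using norming_graphD(3)[OF G] by (auto simp: algebra_simps)
    then show "(k *\<^sub>R x, k * a) \<in> G'" unfolding G'_def by blast
  next
    fix x a assume "(x, a) \<in> G'"
    then show "a \<le> norm x" unfolding G'_def
      using separating_constant_dominates[OF G _ below above] by blast
  qed
  moreover have "G \<subseteq> G'" unfolding G'_def by (force intro: exI[of _ "0::real"])
  moreover have "(y, c) \<in> G'"
    unfolding G'_def using norming_graphD(3)[OF G norming_graphD(1)[OF G], of 0]
    by (force intro: exI[of _ "1::real"])
  ultimately show ?thesis using y by blast
qed

lemma norming_graph_line:
  fixes u :: "'a::real_normed_vector"
  shows "norming_graph u {(c *\<^sub>R u, c * norm u) | c. True}"
  unfolding norming_graph_def
proof (intro conjI allI impI)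
  show "(u, norm u) \<in> {(c *\<^sub>R u, c * norm u) | c. True}"
    by (intro CollectI exI[of _ 1]) simp
next
  fix x a y b assume "(x, a) \<in> {(c *\<^sub>R u, c * norm u) | c. True}"
    "(y, b) \<in> {(c *\<^sub>R u, c * norm u) | c. True}"
  then obtain c d where "x = c *\<^sub>R u" "a = c * norm u" "y = d *\<^sub>R u" "b = d * norm u" by blast
  then show "(x + y, a + b) \<in> {(c *\<^sub>R u, c * norm u) | c. True}"
    by (intro CollectI exI[of _ "c + d"]) (simp add: algebra_simps)
next
  fix x a k assume "(x, a) \<in> {(c *\<^sub>R u, c * norm u) | c. True}"
  then obtain c where "x = c *\<^sub>R u" "a = c * norm u" by blast
  then show "(k *\<^sub>R x, k * a) \<in> {(c *\<^sub>R u, c * norm u) | c. True}"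
    by (intro CollectI exI[of _ "k * c"]) simp
next
  fix x a assume "(x, a) \<in> {(c *\<^sub>R u, c * norm u) | c. True}"
  then obtain c where "x = c *\<^sub>R u" "a = c * norm u" by blast
  then show "a \<le> norm x" by (simp add: mult_right_mono)
qed

lemma norming_graph_chain_Union:
  assumes C: "C \<in> chains {G. norming_graph u G}" and ne: "C \<noteq> {}"
  shows "norming_graph u (\<Union>C)"
proof -
  have graph: "\<And>G. G \<in> C \<Longrightarrow> norming_graph u G"
    and chain: "\<And>G G'. G \<in> C \<Longrightarrow> G' \<in> C \<Longrightarrow> G \<subseteq> G' \<or> G' \<subseteq> G"
    using C unfolding chains_def chain_subset_def by blast+
  show ?thesis unfolding norming_graph_def
  proof (intro conjI allI impI)
    show "(u, norm u) \<in> \<Union>C" using ne graph norming_graphD(1) by blast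
  next
    fix x a y b assume "(x, a) \<in> \<Union>C" "(y, b) \<in> \<Union>C"
    then obtain G G' where GG': "G \<in> C" "G' \<in> C" "(x, a) \<in> G" "(y, b) \<in> G'" by blast
    then have "(x, a) \<in> G \<union> G'" "(y, b) \<in> G \<union> G'" "G \<union> G' \<in> C"
      using chain[OF GG'(1,2)] by (auto simp: sup_absorb1 sup_absorb2)
    then show "(x + y, a + b) \<in> \<Union>C" using graph norming_graphD(2) by blast
  next
    fix x a c assume "(x, a) \<in> \<Union>C"
    then show "(c *\<^sub>R x, c * a) \<in> \<Union>C" using graph norming_graphD(3) by blast
  next
    fix x a assume "(x, a) \<in> \<Union>C"
    then show "a \<le> norm x" using graph norming_graphD(4) by blast
  qed
qed

lemma hahn_banach_norm:
  fixes u :: "'a::real_normed_vector"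
  obtains \<phi> where "linear \<phi>" "\<phi> u = norm u" "\<And>y. \<phi> y \<le> norm y"
proof -
  have "\<forall>C\<in>chains {G. norming_graph u G}. \<exists>U\<in>{G. norming_graph u G}. \<forall>X\<in>C. X \<subseteq> U"
  proof
    fix C assume C: "C \<in> chains {G. norming_graph u G}"
    show "\<exists>U\<in>{G. norming_graph u G}. \<forall>X\<in>C. X \<subseteq> U"
    proof (cases "C = {}")
      case True then show ?thesis using norming_graph_line by blast
    next
      case False then show ?thesis using norming_graph_chain_Union[OF C] by blast
    qed
  qed
  from Zorn_Lemma2[OF this] obtain G where G: "norming_graph u G"
    and maximal: "\<And>G'. norming_graph u G' \<Longrightarrow> G \<subseteq> G' \<Longrightarrow> G' = G"
    by blast
  have total: "\<exists>a. (y, a) \<in> G" for y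
    using norming_graph_extend[OF G] maximal by blast
  define \<phi> where "\<phi> y = (SOME a. (y, a) \<in> G)" for y
  have graph: "(y, \<phi> y) \<in> G" for y unfolding \<phi>_def using total[of y] by (rule someI_ex)
  show ?thesis
  proof (rule that)
    show "linear \<phi>"
    proof (rule linearI)
      show "\<phi> (x + z) = \<phi> x + \<phi> z" for x z
        using norming_graph_unique[OF G graph norming_graphD(2)[OF G graph graph]] .
      show "\<phi> (k *\<^sub>R x) = k *\<^sub>R \<phi> x" for k x
        using norming_graph_unique[OF G graph norming_graphD(3)[OF G graph]] by simp
    qed
    show "\<phi> u = norm u" using norming_graph_unique[OF G graph norming_graphD(1)[OF G]] .
    show "\<phi> y \<le> norm y" for y using norming_graphD(4)[OF G graph] .
  qed
qed

lemma norming_functional: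
  fixes u :: "'a::real_normed_vector"
  obtains \<phi> :: "'a \<Rightarrow>\<^sub>L real" where "norm \<phi> \<le> 1" "blinfun_apply \<phi> u = norm u"
proof -
  obtain \<phi> where lin: "linear \<phi>" and \<phi>u: "\<phi> u = norm u" and le: "\<And>y. \<phi> y \<le> norm y"
    using hahn_banach_norm by blast
  have abs_le: "\<bar>\<phi> y\<bar> \<le> norm y" for y
    using le[of y] le[of "-y"] by (simp add: linear_neg[OF lin])
  have bl: "bounded_linear \<phi>"
    by (rule bounded_linear_intro[where K=1])
      (use lin abs_le in \<open>auto simp: linear_add linear_scale\<close>)
  show ?thesis
  proof (rule that[of "Blinfun \<phi>"])
    show "norm (Blinfun \<phi>) \<le> 1"
      by (rule norm_blinfun_bound) (use abs_le in \<open>auto simp: bounded_linear_Blinfun_apply[OF bl]\<close>)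
    show "blinfun_apply (Blinfun \<phi>) u = norm u"
      by (simp add: bounded_linear_Blinfun_apply[OF bl] \<phi>u)
  qed
qed

lemma blinfun_almost_norming_vector:
  fixes A :: "'a::real_normed_vector \<Rightarrow>\<^sub>L 'b::real_normed_vector"
  assumes "\<sigma> > 0"
  obtains x where "norm x \<le> 1" "norm A - \<sigma> < norm (blinfun_apply A x)"
proof (rule ccontr)
  assume "\<not> thesis"
  then have small: "\<And>x. norm x \<le> 1 \<Longrightarrow> norm (blinfun_apply A x) \<le> norm A - \<sigma>"
    using that by force
  have "norm (blinfun_apply A x) \<le> (norm A - \<sigma>) * norm x" for x
  proof (cases "x = 0")
    case True then show ?thesis by simp
  next
    case False
    have "norm (blinfun_apply A ((1 / norm x) *\<^sub>R x)) \<le> norm A - \<sigma>"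
      by (rule small) (use False in simp)
    then show ?thesis using False by (simp add: blinfun.scaleR_right field_simps)
  qed
  moreover have "0 \<le> norm A - \<sigma>" using small[of 0] by simp
  ultimately have "norm A \<le> norm A - \<sigma>" by (intro norm_blinfun_bound) auto
  then show False using assms by simp
qed

lemma unit_norming_functional:
  fixes x :: "'a::real_normed_vector"
  assumes "x \<noteq> 0"
  obtains g :: "'a \<Rightarrow>\<^sub>L real" where "norm g = 1" "blinfun_apply g x = norm x"
proof -
  obtain g :: "'a \<Rightarrow>\<^sub>L real" where g: "norm g \<le> 1" "blinfun_apply g x = norm x"
    using norming_functional by blast
  have "norm x \<le> norm g * norm x" using norm_blinfun[of g x] g(2) by simp
  then have "1 \<le> norm g" using assms by simp
  then show ?thesis using that g by simp
qed

lemma rank_one_apply [simp]: "blinfun_apply (rank_one f y) x = blinfun_apply f x *\<^sub>R y"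
  by (simp add: rank_one_def)

lemma linear_rank_one: "linear (\<lambda>f. rank_one f y)"
  unfolding rank_one_def
  by (rule bounded_linear.linear)
    (rule bounded_bilinear.bounded_linear_right[OF bounded_bilinear_blinfun_compose])

lemma norm_rank_one_ge: "norm f * norm y \<le> norm (rank_one f y)"
proof (rule field_le_epsilon)
  fix \<sigma> :: real assume \<sigma>: "\<sigma> > 0"
  show "norm f * norm y \<le> norm (rank_one f y) + \<sigma>"
  proof (cases "y = 0")
    case True then show ?thesis using \<sigma> by simp
  next
    case False
    then have ny: "norm y > 0" by simp
    obtain x where x: "norm x \<le> 1" "norm f - \<sigma> / norm y < \<bar>blinfun_apply f x\<bar>"
      using blinfun_almost_norming_vector[of "\<sigma> / norm y" f] \<sigma> ny by auto
    have "\<bar>blinfun_apply f x\<bar> * norm y = norm (blinfun_apply (rank_one f y) x)" by simp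
    also have "\<dots> \<le> norm (rank_one f y) * norm x" by (rule norm_blinfun)
    also have "\<dots> \<le> norm (rank_one f y)" using x(1) by (simp add: mult_left_le)
    finally have "(norm f - \<sigma> / norm y) * norm y \<le> norm (rank_one f y)"
      using x(2) ny by (smt (verit) mult_right_mono)
    then show ?thesis using ny by (simp add: field_simps)
  qed
qed

lemma fin_dim_subspace_span: "finite B \<Longrightarrow> fin_dim_subspace (span B)"
  unfolding fin_dim_subspace_def by blast

lemma fin_dim_subspace_linear_image:
  assumes "linear g" and "fin_dim_subspace E"
  shows "fin_dim_subspace (g ` E)"
proof -
  obtain B where "finite B" "span B = E" "subspace E"
    using assms(2) unfolding fin_dim_subspace_def by blast
  then show ?thesis unfolding fin_dim_subspace_def
    using span_linear_image[OF assms(1), of B] linear_subspace_image[OF assms(1)] by auto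
qed

lemma octahedral_on_unit_vector:
  assumes "subspace Z" and "octahedral_on Z"
  obtains y where "y \<in> Z" "norm y = 1"
proof -
  have "fin_dim_subspace {0}"
    unfolding fin_dim_subspace_def by (auto intro!: exI[of _ "{}"] simp: subspace_single_0)
  moreover have "{0} \<subseteq> Z" using assms(1) subspace_0 by blast
  ultimately show ?thesis using assms(2) that unfolding octahedral_on_def
    by (metis zero_less_one)
qed

text \<open>
  Smoothness at a point of small roughness: if eta u < \<delta>, a norming functional \<phi>
  of u is an approximate derivative of the norm at u, with error \<delta> norm h.
\<close>
lemma non_rough_smooth_point:
  assumes "\<not> rough TYPE('b)" and "\<delta> > 0"
  obtains u :: "'b::real_normed_vector" and \<phi> :: "'b \<Rightarrow>\<^sub>L real" and r
  where "norm u = 1" "norm \<phi> \<le> 1" "r > 0"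
    "\<And>h. norm h < r \<Longrightarrow> norm (u + h) \<le> 1 + blinfun_apply \<phi> h + \<delta> * norm h"
proof -
  obtain u :: 'b where u: "norm u = 1" "eta u < ereal \<delta>"
    using assms unfolding rough_def eps_rough_def by (auto simp: not_le)
  have "eventually (\<lambda>h. ereal ((norm (u + h) + norm (u - h) - 2) / norm h) < ereal \<delta>) (at 0)"
    using u(2) unfolding eta_def by (rule Limsup_lessD)
  then obtain r where r: "r > 0"
    "\<And>h. h \<noteq> 0 \<Longrightarrow> norm h < r \<Longrightarrow> norm (u + h) + norm (u - h) - 2 < \<delta> * norm h"
    unfolding eventually_at by (auto simp: pos_divide_less_eq)
  obtain \<phi> :: "'b \<Rightarrow>\<^sub>L real" where \<phi>: "norm \<phi> \<le> 1" "blinfun_apply \<phi> u = norm u"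
    using norming_functional by blast
  have "norm (u + h) \<le> 1 + blinfun_apply \<phi> h + \<delta> * norm h" if "norm h < r" for h
  proof (cases "h = 0")
    case True then show ?thesis using u by (simp add: blinfun.zero_right)
  next
    case False
    have "blinfun_apply \<phi> (u - h) \<le> norm \<phi> * norm (u - h)"
      using norm_blinfun[of \<phi> "u - h"] by simp
    also have "\<dots> \<le> norm (u - h)" using \<phi>(1) by (simp add: mult_left_le_one_le)
    finally have "1 - blinfun_apply \<phi> h \<le> norm (u - h)"
      using \<phi>(2) u(1) by (simp add: blinfun.diff_right)
    then show ?thesis using r(2)[OF False that] by simp
  qed
  then show ?thesis using that u(1) \<phi>(1) r(1) by blast
qed

text \<open>
  Evaluating at an almost norming vector x
  (with f x \<ge> 0) gives f x \<approx> 1, and expanding norm (f x u + t T x) at u along the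
  small increment (t / f x) T x shows that the functional f + t (\<phi> \<circ> T) is almost as
  large at x.
\<close>
lemma octahedral_transfer_estimate:
  fixes u :: "'b::real_normed_vector" and \<phi> :: "'b \<Rightarrow>\<^sub>L real"
    and T :: "'a::real_normed_vector \<Rightarrow>\<^sub>L 'b" and f :: "'a \<Rightarrow>\<^sub>L real"
  assumes u: "norm u = 1"
    and smooth: "\<And>h. norm h < r \<Longrightarrow> norm (u + h) \<le> 1 + blinfun_apply \<phi> h + \<delta> * norm h"
    and T: "norm T \<le> 1"
    and oct: "(1 - \<eta>) * (1 + t) \<le> norm (rank_one f u + t *\<^sub>R T)"
    and t: "0 < t" "t \<le> 1" "4 * t \<le> r" and \<eta>: "0 < \<eta>" "\<eta> \<le> 1/8" and \<delta>: "0 \<le> \<delta>"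
  shows "(1 - \<eta>) * (1 + t) - \<eta> - \<delta> * t \<le> norm (f + t *\<^sub>R (\<phi> o\<^sub>L T))"
proof -
  let ?N = "rank_one f u + t *\<^sub>R T"
  obtain x0 where x0: "norm x0 \<le> 1" "norm ?N - \<eta> < norm (blinfun_apply ?N x0)"
    using blinfun_almost_norming_vector[OF \<eta>(1)] by blast
  define x where "x = (if blinfun_apply f x0 \<ge> 0 then x0 else -x0)"
  define a where "a = blinfun_apply f x"
  define w where "w = blinfun_apply T x"
  have x: "norm x \<le> 1" using x0 by (simp add: x_def)
  have a: "a \<ge> 0" by (simp add: a_def x_def blinfun.minus_right)
  have w: "norm w \<le> 1"
    using norm_blinfun[of T x] mult_le_one[OF T norm_ge_zero x] by (simp add: w_def)
  have Nx: "blinfun_apply ?N x = a *\<^sub>R u + t *\<^sub>R w"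
    by (simp add: a_def w_def plus_blinfun.rep_eq scaleR_blinfun.rep_eq)
  have "norm (blinfun_apply ?N x) = norm (blinfun_apply ?N x0)"
    by (simp add: x_def blinfun.minus_right)
  then have big: "(1 - \<eta>) * (1 + t) - \<eta> < norm (a *\<^sub>R u + t *\<^sub>R w)"
    using x0(2) oct Nx by simp
  have "norm (a *\<^sub>R u + t *\<^sub>R w) \<le> a + t"
    using norm_triangle_ineq[of "a *\<^sub>R u" "t *\<^sub>R w"] a u t w
    by (smt (verit) mult_left_le norm_scaleR real_norm_def abs_of_nonneg)
  then have "1 - \<eta> * (2 + t) < a" using big by (simp add: algebra_simps)
  moreover have "\<eta> * (2 + t) \<le> (1/8) * 3" using \<eta> t by (intro mult_mono) auto
  ultimately have a_half: "a > 1/2" by simp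
  define h where "h = (t / a) *\<^sub>R w"
  have "norm h \<le> t / a" unfolding h_def using w t a_half by (simp add: divide_right_mono mult_left_le)
  also have "t / a < 2 * t" using a_half t by (simp add: field_simps)
  finally have "norm h < r" using t by simp
  have "norm (a *\<^sub>R u + t *\<^sub>R w) = a * norm (u + h)"
  proof -
    have "a *\<^sub>R u + t *\<^sub>R w = a *\<^sub>R (u + h)" unfolding h_def using a_half by (simp add: scaleR_add_right)
    then show ?thesis using a by simp
  qed
  also have "\<dots> \<le> a * (1 + blinfun_apply \<phi> h + \<delta> * norm h)"
    using smooth[OF \<open>norm h < r\<close>] a by (rule mult_left_mono)
  also have "\<dots> = a + t * blinfun_apply \<phi> w + \<delta> * t * norm w"
    unfolding h_def using a_half t by (simp add: blinfun.scaleR_right field_simps)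
  also have "\<dots> \<le> a + t * blinfun_apply \<phi> w + \<delta> * t"
    using w \<delta> t by (simp add: mult_left_le)
  also have "a + t * blinfun_apply \<phi> w = blinfun_apply (f + t *\<^sub>R (\<phi> o\<^sub>L T)) x"
    by (simp add: a_def w_def plus_blinfun.rep_eq scaleR_blinfun.rep_eq)
  also have "\<dots> \<le> norm (f + t *\<^sub>R (\<phi> o\<^sub>L T)) * norm x"
    using norm_blinfun[of "f + t *\<^sub>R (\<phi> o\<^sub>L T)" x] by simp
  also have "\<dots> \<le> norm (f + t *\<^sub>R (\<phi> o\<^sub>L T))" using x by (simp add: mult_left_le)
  finally show ?thesis using big by simp
qed

text \<open>Convexity of t \<mapsto> norm (f + t z): a lower bound 1 + t0 c at t0 persists
  as 1 + t c for all t \<ge> t0.\<close>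
lemma ray_convexity_bound:
  fixes f z :: "'a::real_normed_vector"
  assumes f: "norm f = 1" and t: "0 < t0" "t0 \<le> t"
    and at_t0: "1 + t0 * c \<le> norm (f + t0 *\<^sub>R z)"
  shows "1 + t * c \<le> norm (f + t *\<^sub>R z)"
proof -
  define l where "l = t0 / t"
  have l: "0 < l" "l \<le> 1" using t by (auto simp: l_def)
  have "f + t0 *\<^sub>R z = (1 - l) *\<^sub>R f + l *\<^sub>R (f + t *\<^sub>R z)"
    using t by (simp add: l_def algebra_simps)
  then have "norm (f + t0 *\<^sub>R z) \<le> (1 - l) + l * norm (f + t *\<^sub>R z)"
    using norm_triangle_ineq[of "(1 - l) *\<^sub>R f" "l *\<^sub>R (f + t *\<^sub>R z)"] l f by simp
  then have "t * (l + t0 * c) \<le> t * (l * norm (f + t *\<^sub>R z))"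
    using at_t0 t by (intro mult_left_mono) auto
  moreover have "t * (l + t0 * c) = t0 * (1 + t * c)"
    and "t * (l * norm (f + t *\<^sub>R z)) = t0 * norm (f + t *\<^sub>R z)"
    using t by (simp_all add: l_def field_simps)
  ultimately have "t0 * (1 + t * c) \<le> t0 * norm (f + t *\<^sub>R z)" by simp
  then show ?thesis using t by simp
qed

text \<open>The local estimate near 0 (as produced by the transfer estimate) with \<eta> = e t0 / 8
  yields the octahedral ray bound (1 - e)(1 + t) on the whole half-line: directly for
  t \<le> t0, and by convexity beyond t0.\<close>
lemma ray_lower_bound:
  fixes f z :: "'a::real_normed_vector"
  assumes local: "\<And>s. 0 < s \<Longrightarrow> s \<le> t0 \<Longrightarrow> (1 - \<eta>) * (1 + s) - \<eta> - (e/2) * s \<le> norm (f + s *\<^sub>R z)"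
    and f: "norm f = 1" and t0: "0 < t0" "t0 \<le> 1/4" and \<eta>: "\<eta> = e * t0 / 8"
    and e: "0 < e" "e \<le> 1/2" and t: "0 \<le> t"
  shows "(1 - e) * (1 + t) \<le> norm (f + t *\<^sub>R z)"
proof -
  have et0: "0 \<le> e * t0" "e * t0 \<le> e" using e t0 by (auto intro: mult_left_le)
  have local_bound: "1 + s - 3/8 * (e * t0) - e * s / 2 \<le> norm (f + s *\<^sub>R z)"
    if "0 < s" "s \<le> t0" for s
  proof -
    have "\<eta> * (2 + s) \<le> (e * t0 / 8) * 3" unfolding \<eta> using e t0 that by (intro mult_left_mono) auto
    moreover have "(1 - \<eta>) * (1 + s) - \<eta> - (e/2) * s = 1 + s - \<eta> * (2 + s) - e * s / 2"
      by (simp add: algebra_simps)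
    ultimately show ?thesis using local[OF that] by linarith
  qed
  have expand: "(1 - e) * (1 + t) = 1 + t - e - e * t" by (simp add: algebra_simps)
  consider "t = 0" | "0 < t" "t \<le> t0" | "t0 < t" using t by linarith
  then show ?thesis
  proof cases
    case 1 then show ?thesis using f e by simp
  next
    case 2
    have "0 \<le> e * t" using e 2 by simp
    then show ?thesis using local_bound[OF 2] et0 expand by linarith
  next
    case 3
    have "1 + t0 * (1 - e) \<le> norm (f + t0 *\<^sub>R z)"
      using local_bound[OF t0(1) order_refl] et0 by (simp add: algebra_simps)
    then have "1 + t * (1 - e) \<le> norm (f + t *\<^sub>R z)"
      using ray_convexity_bound[OF f t0(1)] 3 by simp
    moreover have "(1 - e) * (1 + t) \<le> 1 + t * (1 - e)" using e by (simp add: algebra_simps)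
    ultimately show ?thesis by linarith
  qed
qed

text \<open>Octahedrality of H applied to the finite-dimensional space E \<otimes> u of rank-one
  operators: one T \<in> H is almost l1-orthogonal to every f \<otimes> u with f a unit vector of E.\<close>
lemma octahedral_rank_one_witness:
  fixes H :: "('a::real_normed_vector \<Rightarrow>\<^sub>L 'b::real_normed_vector) set"
  assumes H: "tensor_dual \<subseteq> H" "octahedral_on H"
    and E: "fin_dim_subspace E" and u: "norm u = 1" and \<eta>: "0 < \<eta>" "\<eta> \<le> 1"
  obtains T where "T \<in> H" "norm T = 1"
    "\<And>f t. f \<in> E \<Longrightarrow> norm f = 1 \<Longrightarrow> 0 \<le> t \<Longrightarrow>
       (1 - \<eta>) * (1 + t) \<le> norm (rank_one f u + t *\<^sub>R T)"
proof -
  let ?F = "(\<lambda>f. rank_one f u) ` E"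
  have "fin_dim_subspace ?F" by (rule fin_dim_subspace_linear_image[OF linear_rank_one E])
  moreover have "?F \<subseteq> H"
    using H(1) span_base[of _ "{rank_one f y | f y. True}"] unfolding tensor_dual_def by blast
  ultimately obtain T where T: "T \<in> H" "norm T = 1"
    and oct: "\<And>A t. A \<in> ?F \<Longrightarrow> (1 - \<eta>) * (norm A + \<bar>t\<bar>) \<le> norm (A + t *\<^sub>R T)"
    using H(2) \<eta>(1) unfolding octahedral_on_def by meson
  have "(1 - \<eta>) * (1 + t) \<le> norm (rank_one f u + t *\<^sub>R T)"
    if "f \<in> E" "norm f = 1" "0 \<le> t" for f t
  proof -
    have "1 \<le> norm (rank_one f u)" using norm_rank_one_ge[of f u] that u by simp
    then have "(1 - \<eta>) * (1 + t) \<le> (1 - \<eta>) * (norm (rank_one f u) + \<bar>t\<bar>)"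
      using \<eta> that by (intro mult_left_mono) auto
    also have "\<dots> \<le> norm (rank_one f u + t *\<^sub>R T)" using oct that by blast
    finally show ?thesis .
  qed
  then show ?thesis using that T by blast
qed

text \<open>
  The candidate octahedral direction in X^*: with T from the witness lemma and \<phi> the
  approximate derivative of the norm of Y at u, the functional z = \<phi> \<circ> T satisfies the
  ray bound (1 - e)(1 + t) against every unit functional of E.
\<close>
lemma dual_octahedral_direction:
  fixes H :: "('a::real_normed_vector \<Rightarrow>\<^sub>L 'b::real_normed_vector) set"
    and E :: "('a \<Rightarrow>\<^sub>L real) set" and u :: 'b
  assumes H: "tensor_dual \<subseteq> H" "octahedral_on H" and E: "fin_dim_subspace E"
    and u: "norm u = 1" and \<phi>: "norm \<phi> \<le> 1" and r: "r > 0"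
    and smooth: "\<And>h. norm h < r \<Longrightarrow> norm (u + h) \<le> 1 + blinfun_apply \<phi> h + (e/2) * norm h"
    and e: "0 < e" "e \<le> 1/2"
  obtains z :: "'a \<Rightarrow>\<^sub>L real" where "norm z \<le> 1"
    "\<And>f t. f \<in> E \<Longrightarrow> norm f = 1 \<Longrightarrow> 0 \<le> t \<Longrightarrow> (1 - e) * (1 + t) \<le> norm (f + t *\<^sub>R z)"
proof -
  define t0 where "t0 = min r 1 / 4"
  have t0: "0 < t0" "t0 \<le> 1/4" "4 * t0 \<le> r" using r by (auto simp: t0_def)
  define \<eta> where "\<eta> = e * t0 / 8"
  have "e * t0 \<le> 1 * 1" using e t0 by (intro mult_mono) auto
  then have \<eta>: "0 < \<eta>" "\<eta> \<le> 1/8" using e t0 by (auto simp: \<eta>_def)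
  have "\<eta> \<le> 1" using \<eta>(2) by simp
  obtain T where "T \<in> H" and T: "norm T = 1" and oct: "\<And>f t. f \<in> E \<Longrightarrow> norm f = 1 \<Longrightarrow> 0 \<le> t \<Longrightarrow>
      (1 - \<eta>) * (1 + t) \<le> norm (rank_one f u + t *\<^sub>R T)"
    by (rule octahedral_rank_one_witness[OF H E u \<eta>(1) \<open>\<eta> \<le> 1\<close>]) (rule that)
  show ?thesis
  proof (rule that[of "\<phi> o\<^sub>L T"])
    show "norm (\<phi> o\<^sub>L T) \<le> 1"
      using norm_blinfun_compose[of \<phi> T] mult_le_one[OF \<phi> norm_ge_zero, of T] T by simp
    fix f and t :: real assume f: "f \<in> E" "norm f = 1" and t: "0 \<le> t"
    show "(1 - e) * (1 + t) \<le> norm (f + t *\<^sub>R (\<phi> o\<^sub>L T))"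
    proof (rule ray_lower_bound[OF _ f(2) t0(1,2) \<eta>_def e t])
      fix s assume s: "0 < s" "s \<le> t0"
      show "(1 - \<eta>) * (1 + s) - \<eta> - (e/2) * s \<le> norm (f + s *\<^sub>R (\<phi> o\<^sub>L T))"
        using octahedral_transfer_estimate[OF u smooth _ oct[OF f less_imp_le[OF s(1)]]]
          T s t0 \<eta> e by simp
    qed
  qed
qed

text \<open>A ray bound c (1 + t) at least as large as that along a line through a unit vector
  forces c \<le> norm z, since norm (f + t z) \<le> 1 + t norm z.\<close>
lemma ray_bound_norm_ge:
  fixes f z :: "'a::real_normed_vector"
  assumes f: "norm f = 1" and ray: "\<And>t. 0 \<le> t \<Longrightarrow> c * (1 + t) \<le> norm (f + t *\<^sub>R z)"
  shows "c \<le> norm z"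
proof (rule ccontr)
  assume "\<not> c \<le> norm z"
  define t where "t = (2 + \<bar>c\<bar>) / (c - norm z)"
  have t: "0 < t" "t * (c - norm z) = 2 + \<bar>c\<bar>"
    using \<open>\<not> c \<le> norm z\<close> by (auto simp: t_def)
  have "c * (1 + t) \<le> norm f + norm (t *\<^sub>R z)"
    using ray[of t] t norm_triangle_ineq[of f "t *\<^sub>R z"] by simp
  also have "\<dots> = 1 + t * norm z" using f t by simp
  finally show False using t by (simp add: algebra_simps)
qed

text \<open>From unit vectors and t \<ge> 0 to all vectors and scalars, by homogeneity and the
  symmetry of the subspace E.\<close>
lemma ray_bound_homogeneous:
  fixes z :: "'a::real_normed_vector"
  assumes E: "subspace E" and c: "0 \<le> c" "c \<le> norm z"
    and ray: "\<And>f t. f \<in> E \<Longrightarrow> norm f = 1 \<Longrightarrow> 0 \<le> t \<Longrightarrow> c * (1 + t) \<le> norm (f + t *\<^sub>R z)"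
    and x: "x \<in> E"
  shows "c * (norm x + \<bar>s\<bar>) \<le> norm (x + s *\<^sub>R z)"
proof (cases "x = 0")
  case True
  have "c * \<bar>s\<bar> \<le> norm z * \<bar>s\<bar>" using c by (intro mult_right_mono) auto
  then show ?thesis using True by (simp add: mult.commute)
next
  case False
  define n where "n = norm x"
  define \<sigma> :: real where "\<sigma> = (if 0 \<le> s then 1 else -1)"
  define f where "f = (\<sigma> / n) *\<^sub>R x"
  have n: "n > 0" using False by (simp add: n_def)
  have \<sigma>: "\<bar>\<sigma>\<bar> = 1" "\<sigma> * \<sigma> = 1" "\<sigma> * \<bar>s\<bar> = s" by (auto simp: \<sigma>_def)
  have f: "f \<in> E" "norm f = 1"
    using x E n \<sigma>(1) by (auto simp: f_def n_def subspace_scale)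
  have "x + s *\<^sub>R z = (\<sigma> * n) *\<^sub>R (f + (\<bar>s\<bar> / n) *\<^sub>R z)"
    using n \<sigma> by (simp add: f_def algebra_simps)
  then have "norm (x + s *\<^sub>R z) = n * norm (f + (\<bar>s\<bar> / n) *\<^sub>R z)"
    using n \<sigma>(1) by (simp add: abs_mult)
  also have "\<dots> \<ge> n * (c * (1 + \<bar>s\<bar> / n))"
    using ray[OF f] n by (intro mult_left_mono) auto
  also have "n * (c * (1 + \<bar>s\<bar> / n)) = c * (norm x + \<bar>s\<bar>)"
    using n by (simp add: n_def field_simps)
  finally show ?thesis .
qed

text \<open>To prove that a space is octahedral it suffices to find, for every small \<epsilon>, a nonzero
  direction z in the unit ball satisfying the octahedral inequality; normalising z only
  increases the coefficient of \<bar>t\<bar>.\<close>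
lemma octahedralI:
  assumes dir: "\<And>E \<epsilon>. fin_dim_subspace (E :: 'a::real_normed_vector set) \<Longrightarrow> 0 < \<epsilon> \<Longrightarrow> \<epsilon> \<le> 1/2 \<Longrightarrow>
     \<exists>z. z \<noteq> 0 \<and> norm z \<le> 1 \<and> (\<forall>x\<in>E. \<forall>t. (1 - \<epsilon>) * (norm x + \<bar>t\<bar>) \<le> norm (x + t *\<^sub>R z))"
  shows "octahedral TYPE('a)"
  unfolding octahedral_on_def
proof (intro allI impI)
  fix E :: "'a set" and \<epsilon> :: real
  assume "fin_dim_subspace E \<and> E \<subseteq> UNIV \<and> 0 < \<epsilon>"
  then have E: "fin_dim_subspace E" and \<epsilon>: "0 < \<epsilon>" by auto
  define e where "e = min \<epsilon> (1/2)"
  have "0 < e" "e \<le> 1/2" using \<epsilon> by (auto simp: e_def)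
  obtain z where z: "z \<noteq> 0" "norm z \<le> 1"
    and oct: "\<And>x t. x \<in> E \<Longrightarrow> (1 - e) * (norm x + \<bar>t\<bar>) \<le> norm (x + t *\<^sub>R z)"
    using dir[OF E \<open>0 < e\<close> \<open>e \<le> 1/2\<close>] by blast
  show "\<exists>y\<in>UNIV. norm y = 1 \<and> (\<forall>x\<in>E. \<forall>t. (1 - \<epsilon>) * (norm x + \<bar>t\<bar>) \<le> norm (x + t *\<^sub>R y))"
  proof (intro bexI conjI ballI allI)
    show "norm ((1 / norm z) *\<^sub>R z) = 1" using z by simp
    fix x t assume "x \<in> E"
    have "\<bar>t\<bar> \<le> \<bar>t / norm z\<bar>" using z by (simp add: abs_div field_simps mult_left_le)
    then have "(1 - \<epsilon>) * (norm x + \<bar>t\<bar>) \<le> (1 - e) * (norm x + \<bar>t / norm z\<bar>)"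
      by (intro mult_mono) (auto simp: e_def)
    also have "\<dots> \<le> norm (x + t *\<^sub>R ((1 / norm z) *\<^sub>R z))"
      using oct[OF \<open>x \<in> E\<close>, of "t / norm z"] by simp
    finally show "(1 - \<epsilon>) * (norm x + \<bar>t\<bar>) \<le> norm (x + t *\<^sub>R ((1 / norm z) *\<^sub>R z))" .
  qed simp
qed

text \<open>If an octahedral space of operators from X is nonzero, then X \<noteq> 0, so by
  Hahn-Banach X^* contains a unit vector.\<close>
lemma unit_functional_of_octahedral_operators:
  fixes H :: "('a::real_normed_vector \<Rightarrow>\<^sub>L 'b::real_normed_vector) set"
  assumes "subspace H" and "octahedral_on H"
  obtains g :: "'a \<Rightarrow>\<^sub>L real" where "norm g = 1"
proof -
  obtain T where "T \<in> H" "norm T = 1" by (rule octahedral_on_unit_vector[OF assms])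
  then have "T \<noteq> 0" by auto
  then obtain a where "blinfun_apply T a \<noteq> 0" using blinfun_eqI[of T 0] by auto
  then have "a \<noteq> 0" by (auto simp: blinfun.zero_right)
  then show ?thesis using unit_norming_functional that by blast
qed

text \<open>
  The octahedral direction for a given E and \<epsilon>: enlarge E by a unit functional g0 (so
  that the ray bound along g0 forces norm z \<ge> 1 - \<epsilon>), take a smooth point of Y for
  \<delta> = \<epsilon>/2, and apply the direction lemma and the homogeneity lemma.
\<close>
lemma dual_octahedral_witness:
  fixes H :: "('a::real_normed_vector \<Rightarrow>\<^sub>L 'b::real_normed_vector) set"
    and E :: "('a \<Rightarrow>\<^sub>L real) set" and g0 :: "'a \<Rightarrow>\<^sub>L real"
  assumes H: "tensor_dual \<subseteq> H" "octahedral_on H" and Y: "\<not> rough TYPE('b)"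
    and g0: "norm g0 = 1" and E: "fin_dim_subspace E" and \<epsilon>: "0 < \<epsilon>" "\<epsilon> \<le> 1/2"
  shows "\<exists>z. z \<noteq> 0 \<and> norm z \<le> 1 \<and> (\<forall>x\<in>E. \<forall>t. (1 - \<epsilon>) * (norm x + \<bar>t\<bar>) \<le> norm (x + t *\<^sub>R z))"
proof -
  obtain B where "finite B" "span B = E" using E unfolding fin_dim_subspace_def by blast
  define E' where "E' = span (insert g0 B)"
  have E': "fin_dim_subspace E'" "subspace E'" "E \<subseteq> E'" "g0 \<in> E'"
    using \<open>finite B\<close> \<open>span B = E\<close> span_mono[of B "insert g0 B"]
    by (auto simp: E'_def fin_dim_subspace_span span_base)
  obtain u :: 'b and \<phi> r where "norm u = 1" "norm \<phi> \<le> 1" "r > 0"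
    and "\<And>h. norm h < r \<Longrightarrow> norm (u + h) \<le> 1 + blinfun_apply \<phi> h + (\<epsilon>/2) * norm h"
    using non_rough_smooth_point[OF Y, of "\<epsilon>/2"] \<epsilon>(1) by auto
  then obtain z where z: "norm z \<le> 1" and ray: "\<And>f t. f \<in> E' \<Longrightarrow> norm f = 1 \<Longrightarrow> 0 \<le> t \<Longrightarrow>
      (1 - \<epsilon>) * (1 + t) \<le> norm (f + t *\<^sub>R z)"
    using dual_octahedral_direction[OF H E'(1)] \<epsilon> by blast
  have z_large: "1 - \<epsilon> \<le> norm z" using ray_bound_norm_ge[OF g0] ray[OF E'(4) g0] by blast
  have "0 \<le> 1 - \<epsilon>" using \<epsilon>(2) by simp
  have "(1 - \<epsilon>) * (norm x + \<bar>t\<bar>) \<le> norm (x + t *\<^sub>R z)" if "x \<in> E" for x t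
    using ray_bound_homogeneous[OF E'(2) \<open>0 \<le> 1 - \<epsilon>\<close> z_large ray] that E'(3) by blast
  moreover have "z \<noteq> 0" using z_large \<epsilon>(2) by auto
  ultimately show ?thesis using z by blast
qed

theorem mainTheorem13:
  fixes H :: "('a::banach \<Rightarrow>\<^sub>L 'b::banach) set"
  assumes "subspace H" and "closed H"
    and "tensor_dual \<subseteq> H"
    and "octahedral_on H"
    and "\<not> rough TYPE('b)"
  shows "octahedral TYPE('a \<Rightarrow>\<^sub>L real)"
proof -
  obtain g0 :: "'a \<Rightarrow>\<^sub>L real" where "norm g0 = 1"
    by (rule unit_functional_of_octahedral_operators[OF assms(1,4)])
  then show ?thesis
    using dual_octahedral_witness[OF assms(3,4,5)] by (intro octahedralI) blast
qed

end
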